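(* Fix integers $k \ge 3$ and $i \in \{2,\dots,k-1\}$, and let $T = \{1,\dots,k\}\setminus\{i\} \subset \mathbb{Z}$. There is a function $f : \mathbb{Z} \to \{0,\dots,k-2\}$ such that for each $x \in \mathbb{Z}$, $\sum_{y \in T} f(x-y) \equiv 1 \pmod{k-1}$. *)

theory Defs
  imports "HOL-Number_Theory.Cong"
begin

end

theory Submission
  imports Defs
begin

text \<open>
  Let \<open>T \<subseteq> {1..k}\<close> contain both \<open>1\<close> and \<open>k\<close>. The congruence at \<open>x\<close> can be solved
  for \<open>f (x - 1)\<close> in terms of the values \<open>f (x - y)\<close> with \<open>y \<in> T - {1}\<close>, and for \<open>f (x - k)\<close>
  in terms of those with \<open>y \<in> T - {k}\<close>. Starting from \<open>f = 0\<close> on the window \<open>{0..k-2}\<close>,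
  the first form determines \<open>f\<close> upwards and the second downwards, each value reduced modulo
  the modulus.
\<close>

function forward_solution :: "int set \<Rightarrow> int \<Rightarrow> int \<Rightarrow> int \<Rightarrow> int \<Rightarrow> int" where
  "forward_solution T k m c z =
     (if z < k - 1 then 0
      else (c - (\<Sum>y\<in>T \<inter> {2..k}. forward_solution T k m c (z + 1 - y))) mod m)"
  by auto
termination
  by (relation "measure (\<lambda>(T, k, m, c, z). nat (z - k + 2))") auto

function backward_solution :: "int set \<Rightarrow> int \<Rightarrow> int \<Rightarrow> int \<Rightarrow> int \<Rightarrow> int" where
  "backward_solution T k m c z =
     (if 0 \<le> z then 0
      else (c - (\<Sum>y\<in>T \<inter> {1..k-1}. backward_solution T k m c (z + k - y))) mod m)"
  by auto
termination
  by (relation "measure (\<lambda>(T, k, m, c, z). nat (- z))") auto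

declare forward_solution.simps [simp del] backward_solution.simps [simp del]

lemma forward_solution_eq_0: "z < k - 1 \<Longrightarrow> forward_solution T k m c z = 0"
  by (simp add: forward_solution.simps)

lemma backward_solution_eq_0: "0 \<le> z \<Longrightarrow> backward_solution T k m c z = 0"
  by (simp add: backward_solution.simps)

lemma forward_solution_step:
  "k - 1 \<le> z \<Longrightarrow> forward_solution T k m c z =
     (c - (\<Sum>y\<in>T \<inter> {2..k}. forward_solution T k m c (z + 1 - y))) mod m"
  by (subst forward_solution.simps) simp

lemma backward_solution_step:
  "z < 0 \<Longrightarrow> backward_solution T k m c z =
     (c - (\<Sum>y\<in>T \<inter> {1..k-1}. backward_solution T k m c (z + k - y))) mod m"
  by (subst backward_solution.simps) simp

lemma forward_solution_range: "0 < m \<Longrightarrow> forward_solution T k m c z \<in> {0..<m}"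
  by (subst forward_solution.simps) simp

lemma backward_solution_range: "0 < m \<Longrightarrow> backward_solution T k m c z \<in> {0..<m}"
  by (subst backward_solution.simps) simp

lemma exists_residue_solution:
  fixes T :: "int set" and k m c :: int
  assumes "T \<subseteq> {1..k}" and "1 \<in> T" and "k \<in> T" and "0 < m"
  shows "\<exists>f. (\<forall>z. f z \<in> {0..<m}) \<and> (\<forall>x. [(\<Sum>y\<in>T. f (x - y)) = c] (mod m))"
proof -
  define f where "f z = (if z < 0 then backward_solution T k m c z else forward_solution T k m c z)"
    for z
  have "[(\<Sum>y\<in>T. f (x - y)) = c] (mod m)" for x
  proof (cases "k \<le> x")
    case True
    have T_split: "T = insert 1 (T \<inter> {2..k})"
      using assms(1,2) by auto
    have "(\<Sum>y\<in>T \<inter> {2..k}. f (x - y)) =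
          (\<Sum>y\<in>T \<inter> {2..k}. forward_solution T k m c (x - 1 + 1 - y))"
      using True by (intro sum.cong) (auto simp: f_def)
    moreover have "f (x - 1) =
          (c - (\<Sum>y\<in>T \<inter> {2..k}. forward_solution T k m c (x - 1 + 1 - y))) mod m"
      using True assms(1,2) forward_solution_step[of k "x - 1" T m c] by (auto simp: f_def)
    ultimately show ?thesis
      by (subst T_split) (simp add: cong_def mod_add_left_eq)
  next
    case False
    have T_split: "T = insert k (T \<inter> {1..k-1})"
      using assms(1,3) by auto
    have "(\<Sum>y\<in>T \<inter> {1..k-1}. f (x - y)) =
          (\<Sum>y\<in>T \<inter> {1..k-1}. backward_solution T k m c (x - k + k - y))"
      using False by (intro sum.cong)
        (auto simp: f_def forward_solution_eq_0 backward_solution_eq_0)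
    moreover have "f (x - k) =
          (c - (\<Sum>y\<in>T \<inter> {1..k-1}. backward_solution T k m c (x - k + k - y))) mod m"
      using False backward_solution_step[of "x - k"] by (simp add: f_def)
    ultimately show ?thesis
      by (subst T_split) (simp add: cong_def mod_add_left_eq)
  qed
  moreover have "f z \<in> {0..<m}" for z
    using assms(4) forward_solution_range backward_solution_range by (simp add: f_def)
  ultimately show ?thesis
    by blast
qed

theorem proposition8:
  fixes k i :: int
  assumes "k \<ge> 3" and "2 \<le> i" and "i \<le> k - 1"
  shows "\<exists>f :: int \<Rightarrow> int. (\<forall>x. f x \<in> {0..k-2}) \<and>
           (\<forall>x. [(\<Sum>y\<in>{1..k} - {i}. f (x - y)) = 1] (mod (k - 1)))"
proof -
  have "\<exists>f. (\<forall>z. f z \<in> {0..<k-1}) \<and> (\<forall>x. [(\<Sum>y\<in>{1..k} - {i}. f (x - y)) = 1] (mod (k - 1)))"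
    using assms by (intro exists_residue_solution) auto
  moreover have "{0..<k-1} = {0..k-2}"
    by auto
  ultimately show ?thesis
    by simp
qed

end
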